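(* In the VI setting below, let $u\in\mathbb{R}^n$ and $y=S(u)$. Then $$\partial_BS(u)=\{A(\mathcal A_s\cup\mathcal B_0)^{-1}\chi(\mathcal A_s\cup\mathcal B_0):\ \mathcal B_0\subseteq\mathcal B\},$$ where $\mathcal A_s=\mathcal A_s(u)$ and $\mathcal B=\mathcal B(u)$.
   Context: VI setting: $A\in\mathbb{R}^{n\times n}$ symmetric positive definite, $\|v\|_1=\sum_i|v_i|$. For $u\in\mathbb{R}^n$, $S(u)=y$ is the unique solution of $\langle Ay,v-y\rangle+\|v\|_1-\|y\|_1\ge\langle u,v-y\rangle$ for all $v\in\mathbb{R}^n$; equivalently there is $q\in\mathbb{R}^n$ with $Ay+q=u$, $y_iq_i=|y_i|$, $|q_i|\le1$, and then $q=u-Ay$. $S$ is globally Lipschitz and directionally differentiable. Index sets (depending on $u$ through $y,q$): $\mathcal A_s(u)=\{i:|q_i|<1\}$ (strongly active), $\mathcal I(u)=\{i:y_i\ne0\}$ (inactive), $\mathcal B(u)=\{i:y_i=0,\ |q_i|=1\}$ (biactive). For $\mathcal N\subseteq\{1,\dots,n\}$: $A(\mathcal N)_{ij}=A_{ij}$ if $i,j\notin\mathcal N$, $A(\mathcal N)_{ij}=0$ if $i\ne j$ and ($i\in\mathcal N$ or $j\in\mathcal N$), $A(\mathcal N)_{ii}=1$ if $i\in\mathcal N$; $\chi(\mathcal N)$ is the diagonal matrix with $\chi(\mathcal N)_{ii}=1$ for $i\notin\mathcal N$ and $0$ otherwise ($A(\mathcal N)$ is invertible). $\partial_BS(u)$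 is the Bouligand subdifferential: all limits $\lim_jS'(u_j)$ with $u_j\to u$ and $S$ differentiable at $u_j$. *)

theory Defs
  imports "HOL-Analysis.Analysis"
begin

definition l1norm :: "real^'n \<Rightarrow> real" where
  "l1norm v = (\<Sum>i\<in>UNIV. \<bar>v $ i\<bar>)"

definition spd :: "real^'n^'n \<Rightarrow> bool" where
  "spd A \<longleftrightarrow> transpose A = A \<and> (\<forall>x. x \<noteq> 0 \<longrightarrow> x \<bullet> (A *v x) > 0)"

definition vi_sol :: "real^'n^'n \<Rightarrow> real^'n \<Rightarrow> real^'n" where
  "vi_sol A u = (THE y. \<forall>v. (A *v y) \<bullet> (v - y) + l1norm v - l1norm y \<ge> u \<bullet> (v - y))"

definition vi_q :: "real^'n^'n \<Rightarrow> real^'n \<Rightarrow> real^'n" where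
  "vi_q A u = u - A *v vi_sol A u"

definition strongly_active :: "real^'n^'n \<Rightarrow> real^'n \<Rightarrow> 'n set" where
  "strongly_active A u = {i. \<bar>vi_q A u $ i\<bar> < 1}"

definition inactive_set :: "real^'n^'n \<Rightarrow> real^'n \<Rightarrow> 'n set" where
  "inactive_set A u = {i. vi_sol A u $ i \<noteq> 0}"

definition biactive :: "real^'n^'n \<Rightarrow> real^'n \<Rightarrow> 'n set" where
  "biactive A u = {i. vi_sol A u $ i = 0 \<and> \<bar>vi_q A u $ i\<bar> = 1}"

definition Amod :: "real^'n^'n \<Rightarrow> 'n set \<Rightarrow> real^'n^'n" where
  "Amod A N = (\<chi> i j. if i \<notin> N \<and> j \<notin> N then A $ i $ j
                        else if i = j then 1 else 0)"

definition chimat :: "'n set \<Rightarrow> real^'n^'n" where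
  "chimat N = (\<chi> i j. if i = j \<and> i \<notin> N then 1 else 0)"

definition bouligand_subdiff ::
  "(real^'n \<Rightarrow> real^'m) \<Rightarrow> real^'n \<Rightarrow> (real^'n^'m) set" where
  "bouligand_subdiff f u = {M. \<exists>us D. us \<longlonglongrightarrow> u \<and>
      (\<forall>j. (f has_derivative (\<lambda>h. D j *v h)) (at (us j))) \<and> D \<longlonglongrightarrow> M}"

end

theory Submission
  imports Defs
begin

text \<open>The variational inequality is equivalent to the KKT system \<open>q = u - A y \<in> \<partial>\<parallel>y\<parallel>\<^sub>1\<close>,
  and \<open>S\<close> is Lipschitz. Fixing a set \<open>N\<close> on which \<open>y\<close> vanishes and which contains the
  strongly active indices, the KKT system at \<open>u + p\<close> is solved by \<open>y + A(N)\<^sup>-\<^sup>1 \<chi>(N) p\<close> as long as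
  the multiplier stays in \<open>[-1, 1]\<close> on \<open>N\<close> and keeps its sign off \<open>N\<close>. Hence \<open>S\<close> is locally affine
  wherever the biactive set is empty, and moving from \<open>u\<close> in a suitable direction makes a
  prescribed \<open>B0 \<subseteq> \<B>(u)\<close> strongly active and the rest of \<open>\<B>(u)\<close> inactive, which gives \<open>\<supseteq>\<close>.
  Conversely, if \<open>S\<close> is differentiable at \<open>v\<close>, the same formula with \<open>N\<close> the zero set of \<open>S v\<close>
  holds along the rays of a cone of directions spanning \<open>\<real>\<^sup>n\<close>, so by linearity \<open>S'(v) = A(N)\<^sup>-\<^sup>1 \<chi>(N)\<close>;
  near \<open>u\<close> this zero set lies between \<open>\<A>\<^sub>s(u)\<close> and \<open>\<A>\<^sub>s(u) \<union> \<B>(u)\<close>, and the finitely many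
  candidate matrices form a closed set, which gives \<open>\<subseteq>\<close>.\<close>

section \<open>The variational inequality and its KKT system\<close>

definition vi_solves :: "real^'n^'n \<Rightarrow> real^'n \<Rightarrow> real^'n \<Rightarrow> bool" where
  "vi_solves A u y \<longleftrightarrow> (\<forall>v. (A *v y) \<bullet> (v - y) + l1norm v - l1norm y \<ge> u \<bullet> (v - y))"

definition vi_kkt :: "real^'n^'n \<Rightarrow> real^'n \<Rightarrow> real^'n \<Rightarrow> bool" where
  "vi_kkt A u y \<longleftrightarrow> (\<forall>i. \<bar>(u - A *v y) $ i\<bar> \<le> 1 \<and> y $ i * (u - A *v y) $ i = \<bar>y $ i\<bar>)"

lemma abs_subgradient_iff:
  fixes q y :: real
  shows "(\<forall>v. q * (v - y) \<le> \<bar>v\<bar> - \<bar>y\<bar>) \<longleftrightarrow> \<bar>q\<bar> \<le> 1 \<and> y * q = \<bar>y\<bar>"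
proof
  assume sub: "\<forall>v. q * (v - y) \<le> \<bar>v\<bar> - \<bar>y\<bar>"
  have "y * q = \<bar>y\<bar>" using sub[rule_format, of 0] sub[rule_format, of "2 * y"] by (simp add: algebra_simps)
  moreover have "\<bar>q\<bar> \<le> 1"
    using sub[rule_format, of "y + 1"] sub[rule_format, of "y - 1"] by (simp add: algebra_simps abs_le_iff) linarith
  ultimately show "\<bar>q\<bar> \<le> 1 \<and> y * q = \<bar>y\<bar>" by blast
next
  assume q: "\<bar>q\<bar> \<le> 1 \<and> y * q = \<bar>y\<bar>"
  show "\<forall>v. q * (v - y) \<le> \<bar>v\<bar> - \<bar>y\<bar>"
  proof
    fix v
    have "q * v \<le> \<bar>v\<bar>" using q by (metis abs_ge_self abs_mult mult_left_le_one_le abs_ge_zero order_trans)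
    thus "q * (v - y) \<le> \<bar>v\<bar> - \<bar>y\<bar>" using q by (simp add: algebra_simps)
  qed
qed

lemma l1norm_add_axis: "l1norm (y + t *\<^sub>R axis i 1) = l1norm y - \<bar>y $ i\<bar> + \<bar>y $ i + t\<bar>"
proof -
  have "l1norm (y + t *\<^sub>R axis i 1) = \<bar>y $ i + t\<bar> + (\<Sum>j\<in>UNIV - {i}. \<bar>y $ j\<bar>)"
    unfolding l1norm_def by (subst sum.remove[of _ i]) (auto simp: axis_def intro!: sum.cong)
  moreover have "l1norm y = \<bar>y $ i\<bar> + (\<Sum>j\<in>UNIV - {i}. \<bar>y $ j\<bar>)"
    unfolding l1norm_def by (subst sum.remove[of _ i]) auto
  ultimately show ?thesis by simp
qed

lemma vi_solves_iff_kkt: "vi_solves A u y \<longleftrightarrow> vi_kkt A u y"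
proof -
  define q where "q = u - A *v y"
  have "vi_solves A u y \<longleftrightarrow> (\<forall>v. q \<bullet> (v - y) \<le> l1norm v - l1norm y)"
    unfolding vi_solves_def q_def by (simp add: algebra_simps)
  also have "\<dots> \<longleftrightarrow> (\<forall>i s. q $ i * (s - y $ i) \<le> \<bar>s\<bar> - \<bar>y $ i\<bar>)"
  proof
    assume "\<forall>v. q \<bullet> (v - y) \<le> l1norm v - l1norm y"
    from this[rule_format, of "y + (s - y $ i) *\<^sub>R axis i 1" for s i]
    show "\<forall>i s. q $ i * (s - y $ i) \<le> \<bar>s\<bar> - \<bar>y $ i\<bar>"
      by (simp add: l1norm_add_axis inner_axis mult.commute)
  next
    assume "\<forall>i s. q $ i * (s - y $ i) \<le> \<bar>s\<bar> - \<bar>y $ i\<bar>"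
    hence "(\<Sum>i\<in>UNIV. q $ i * (v $ i - y $ i)) \<le> (\<Sum>i\<in>UNIV. \<bar>v $ i\<bar> - \<bar>y $ i\<bar>)" for v
      by (intro sum_mono) blast
    thus "\<forall>v. q \<bullet> (v - y) \<le> l1norm v - l1norm y"
      by (simp add: inner_vec_def l1norm_def sum_subtractf)
  qed
  also have "\<dots> \<longleftrightarrow> vi_kkt A u y"
    unfolding vi_kkt_def q_def[symmetric] using abs_subgradient_iff by blast
  finally show ?thesis .
qed

lemma vi_solves_monotone:
  assumes "vi_solves A u1 y1" "vi_solves A u2 y2"
  shows "(y1 - y2) \<bullet> (A *v (y1 - y2)) \<le> (u1 - u2) \<bullet> (y1 - y2)"
proof -
  have "u1 \<bullet> (y2 - y1) \<le> (A *v y1) \<bullet> (y2 - y1) + l1norm y2 - l1norm y1"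
    using assms(1) unfolding vi_solves_def by blast
  moreover have "u2 \<bullet> (y1 - y2) \<le> (A *v y2) \<bullet> (y1 - y2) + l1norm y1 - l1norm y2"
    using assms(2) unfolding vi_solves_def by blast
  ultimately show ?thesis
    by (simp add: inner_commute algebra_simps)
qed

lemma vi_solves_unique:
  assumes "spd A" "vi_solves A u y1" "vi_solves A u y2"
  shows "y1 = y2"
  using vi_solves_monotone[OF assms(2,3)] assms(1) unfolding spd_def
  by (metis inner_zero_left eq_iff_diff_eq_0 not_le)

lemma symmetric_inner_matrix:
  assumes "transpose A = A"
  shows "x \<bullet> (A *v y) = (A *v x) \<bullet> (y::real^'n)"
  by (metis assms dot_lmul_matrix transpose_matrix_vector)

lemma spd_coercive:
  assumes "spd A"
  obtains c where "c > 0" "\<And>x::real^'n. c * (norm x)\<^sup>2 \<le> x \<bullet> (A *v x)"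
proof -
  let ?f = "\<lambda>x::real^'n. x \<bullet> (A *v x)"
  have cont: "continuous_on UNIV ?f"
    by (intro continuous_intros linear_continuous_on matrix_vector_mul_bounded_linear)
  have "axis undefined 1 \<in> sphere (0::real^'n) 1"
    by simp
  then obtain x0 where x0: "x0 \<in> sphere 0 1" "\<And>x. x \<in> sphere 0 1 \<Longrightarrow> ?f x0 \<le> ?f x"
    using continuous_attains_inf[OF compact_sphere _ continuous_on_subset[OF cont]] by blast
  have "x0 \<noteq> 0" using x0(1) by auto
  hence pos: "?f x0 > 0" using assms unfolding spd_def by blast
  have "?f x0 * (norm x)\<^sup>2 \<le> ?f x" for x
  proof (cases "x = 0")
    case False
    have "?f x0 \<le> ?f ((1 / norm x) *\<^sub>R x)" using False by (intro x0(2)) simp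
    also have "\<dots> = ?f x / (norm x)\<^sup>2"
      by (simp add: matrix_vector_mult_scaleR power2_eq_square)
    finally show ?thesis using False by (simp add: field_simps)
  qed simp
  with pos show thesis by (rule that)
qed

definition vi_energy :: "real^'n^'n \<Rightarrow> real^'n \<Rightarrow> real^'n \<Rightarrow> real" where
  "vi_energy A u x = x \<bullet> (A *v x) / 2 + l1norm x - u \<bullet> x"

lemma l1norm_nonneg: "l1norm v \<ge> 0"
  unfolding l1norm_def by (simp add: sum_nonneg)

lemma l1norm_convex:
  assumes "0 \<le> t" "t \<le> 1"
  shows "l1norm ((1 - t) *\<^sub>R a + t *\<^sub>R b) \<le> (1 - t) * l1norm a + t * l1norm b"
proof -
  have "\<bar>(1 - t) * a $ i + t * b $ i\<bar> \<le> (1 - t) * \<bar>a $ i\<bar> + t * \<bar>b $ i\<bar>" for i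
    using assms by (metis abs_mult abs_of_nonneg abs_triangle_ineq diff_ge_0_iff_ge)
  hence "(\<Sum>i\<in>UNIV. \<bar>(1 - t) * a $ i + t * b $ i\<bar>) \<le> (\<Sum>i\<in>UNIV. (1 - t) * \<bar>a $ i\<bar> + t * \<bar>b $ i\<bar>)"
    by (rule sum_mono)
  thus ?thesis unfolding l1norm_def by (simp add: sum.distrib sum_distrib_left)
qed

lemma nonneg_if_quadratic_nonneg_near_zero:
  fixes X C :: real
  assumes "C \<ge> 0" and quad: "\<And>t. 0 < t \<Longrightarrow> t \<le> 1 \<Longrightarrow> 0 \<le> t * X + t\<^sup>2 * C"
  shows "X \<ge> 0"
proof (rule ccontr)
  assume "\<not> X \<ge> 0"
  define t where "t = min 1 (- X / (C + 1))"
  have t: "0 < t" "t \<le> 1" unfolding t_def using \<open>\<not> X \<ge> 0\<close> \<open>C \<ge> 0\<close> by (auto intro!: divide_neg_pos)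
  have "t * C \<le> - X / (C + 1) * C" unfolding t_def using \<open>C \<ge> 0\<close> by (intro mult_right_mono) auto
  also have "\<dots> < - X" using \<open>\<not> X \<ge> 0\<close> \<open>C \<ge> 0\<close> by (simp add: field_simps)
  finally have "t * (X + t * C) < 0" using t by (simp add: mult_pos_neg)
  thus False using quad[OF t] by (simp add: power2_eq_square algebra_simps)
qed

text \<open>First-order optimality: comparing \<open>y\<close> with \<open>y + t (v - y)\<close> and using convexity
  of the \<open>\<ell>\<^sub>1\<close>-norm leaves a quadratic in \<open>t\<close> whose linear coefficient is the VI residual.\<close>
lemma vi_energy_minimizer_solves:
  assumes sym: "transpose A = A" and psd: "\<And>x. x \<bullet> (A *v x) \<ge> 0"
    and min: "\<And>x. vi_energy A u y \<le> vi_energy A u x"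
  shows "vi_solves A u y"
  unfolding vi_solves_def
proof
  fix v
  define d where "d = v - y"
  define X where "X = (A *v y) \<bullet> d + l1norm v - l1norm y - u \<bullet> d"
  have quadratic: "0 \<le> t * X + t\<^sup>2 * (d \<bullet> (A *v d) / 2)" if t: "0 < t" "t \<le> 1" for t
  proof -
    have l1: "l1norm (y + t *\<^sub>R d) \<le> (1 - t) * l1norm y + t * l1norm v"
      using l1norm_convex[OF less_imp_le[OF t(1)] t(2), of y v]
      by (simp add: d_def algebra_simps)
    have "(y + t *\<^sub>R d) \<bullet> (A *v (y + t *\<^sub>R d))
        = y \<bullet> (A *v y) + t * (y \<bullet> (A *v d)) + t * (d \<bullet> (A *v y)) + t\<^sup>2 * (d \<bullet> (A *v d))"
      by (simp add: power2_eq_square algebra_simps)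
    hence quad: "(y + t *\<^sub>R d) \<bullet> (A *v (y + t *\<^sub>R d))
        = y \<bullet> (A *v y) + 2 * t * ((A *v y) \<bullet> d) + t\<^sup>2 * (d \<bullet> (A *v d))"
      by (simp add: symmetric_inner_matrix[OF sym, of y d] inner_commute[of d "A *v y"])
    have "vi_energy A u y \<le> vi_energy A u (y + t *\<^sub>R d)" by (rule min)
    hence "0 \<le> t * ((A *v y) \<bullet> d) + t\<^sup>2 * (d \<bullet> (A *v d) / 2)
        + l1norm (y + t *\<^sub>R d) - l1norm y - t * (u \<bullet> d)"
      unfolding vi_energy_def quad by (simp add: add_divide_distrib algebra_simps)
    moreover have "t * X = t * ((A *v y) \<bullet> d) + t * l1norm v - t * l1norm y - t * (u \<bullet> d)"
      unfolding X_def by (simp add: algebra_simps)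
    ultimately show ?thesis using l1 by (simp add: algebra_simps)
  qed
  have "0 \<le> d \<bullet> (A *v d) / 2" using psd[of d] by simp
  hence "X \<ge> 0" using quadratic by (rule nonneg_if_quadratic_nonneg_near_zero)
  thus "u \<bullet> (v - y) \<le> (A *v y) \<bullet> (v - y) + l1norm v - l1norm y"
    unfolding X_def d_def by simp
qed

lemma vi_energy_has_minimizer:
  fixes A :: "real^'n^'n"
  assumes "spd A"
  obtains y where "\<And>x. vi_energy A u y \<le> vi_energy A u x"
proof -
  obtain c where c: "c > 0" "\<And>x::real^'n. c * (norm x)\<^sup>2 \<le> x \<bullet> (A *v x)"
    using spd_coercive[OF assms] by blast
  define R where "R = 2 * norm u / c"
  have "R \<ge> 0" unfolding R_def using c(1) by simp
  have outside: "vi_energy A u x > 0" if "norm x > R" for x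
  proof -
    have "norm u < c / 2 * norm x" using that c(1) unfolding R_def by (simp add: field_simps)
    hence "norm u * norm x < c / 2 * norm x * norm x"
      using that \<open>R \<ge> 0\<close> by (intro mult_strict_right_mono) auto
    moreover have "u \<bullet> x \<le> norm u * norm x" by (rule norm_cauchy_schwarz)
    ultimately show ?thesis
      using c(2)[of x] l1norm_nonneg[of x] unfolding vi_energy_def power2_eq_square by linarith
  qed
  have cont: "continuous_on UNIV (vi_energy A u)"
    unfolding vi_energy_def l1norm_def
    by (intro continuous_intros linear_continuous_on matrix_vector_mul_bounded_linear) simp_all
  have "0 \<in> cball (0::real^'n) R" using \<open>R \<ge> 0\<close> by simp
  then obtain y where y: "\<And>x. x \<in> cball 0 R \<Longrightarrow> vi_energy A u y \<le> vi_energy A u x"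
    using continuous_attains_inf[OF compact_cball _ continuous_on_subset[OF cont]] by blast
  have "vi_energy A u y \<le> vi_energy A u x" for x
  proof (cases "x \<in> cball 0 R")
    case False
    have "vi_energy A u y \<le> vi_energy A u 0" using \<open>0 \<in> cball 0 R\<close> by (rule y)
    also have "\<dots> = 0" by (simp add: vi_energy_def l1norm_def)
    also have "\<dots> < vi_energy A u x" using False by (intro outside) simp
    finally show ?thesis by simp
  qed (rule y)
  thus thesis by (rule that)
qed

lemma vi_sol_solves:
  assumes "spd A"
  shows "vi_solves A u (vi_sol A u)"
proof -
  obtain y where min: "\<And>x. vi_energy A u y \<le> vi_energy A u x"
    using vi_energy_has_minimizer[OF assms] by blast
  have sym: "transpose A = A" using assms unfolding spd_def by blast
  have psd: "x \<bullet> (A *v x) \<ge> 0" for x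
    using assms unfolding spd_def by (metis inner_zero_left less_eq_real_def)
  have "vi_solves A u y" using sym psd min by (rule vi_energy_minimizer_solves)
  hence "\<exists>!y. vi_solves A u y" using vi_solves_unique[OF assms] by blast
  thus ?thesis unfolding vi_sol_def vi_solves_def[symmetric] by (rule theI')
qed

lemma vi_sol_eqI:
  assumes "spd A" "vi_kkt A u y"
  shows "vi_sol A u = y"
proof (rule vi_solves_unique[OF assms(1) vi_sol_solves[OF assms(1)]])
  show "vi_solves A u y" using assms(2) by (simp add: vi_solves_iff_kkt)
qed

lemma vi_sol_kkt:
  assumes "spd A"
  shows "\<bar>vi_q A u $ i\<bar> \<le> 1" "vi_sol A u $ i * vi_q A u $ i = \<bar>vi_sol A u $ i\<bar>"
proof -
  have "vi_kkt A u (vi_sol A u)" using vi_sol_solves[OF assms] by (simp add: vi_solves_iff_kkt)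
  thus "\<bar>vi_q A u $ i\<bar> \<le> 1" "vi_sol A u $ i * vi_q A u $ i = \<bar>vi_sol A u $ i\<bar>"
    unfolding vi_kkt_def vi_q_def[symmetric] by simp_all
qed

lemma vi_sol_eq_0_if_strongly_active:
  assumes "spd A" "i \<in> strongly_active A u"
  shows "vi_sol A u $ i = 0"
proof (rule ccontr)
  assume "vi_sol A u $ i \<noteq> 0"
  hence "\<bar>vi_sol A u $ i\<bar> * \<bar>vi_q A u $ i\<bar> < \<bar>vi_sol A u $ i\<bar>"
    using assms(2) unfolding strongly_active_def by (simp add: mult_strict_left_mono[of _ 1, simplified])
  moreover have "\<bar>vi_sol A u $ i\<bar> * \<bar>vi_q A u $ i\<bar> = \<bar>vi_sol A u $ i\<bar>"
    using arg_cong[where f = abs, OF vi_sol_kkt(2)[OF assms(1), of u i]] by (simp add: abs_mult)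
  ultimately show False by simp
qed

lemma vi_sol_zero_set:
  assumes "spd A"
  shows "{i. vi_sol A u $ i = 0} = strongly_active A u \<union> biactive A u"
proof -
  have "\<bar>vi_q A u $ i\<bar> < 1 \<or> \<bar>vi_q A u $ i\<bar> = 1" for i
    using vi_sol_kkt(1)[OF assms] by (simp add: order_le_less)
  thus ?thesis using vi_sol_eq_0_if_strongly_active[OF assms]
    unfolding strongly_active_def biactive_def by blast
qed

lemma strongly_active_Int_biactive: "strongly_active A u \<inter> biactive A u = {}"
  unfolding strongly_active_def biactive_def by auto

lemma vi_sol_lipschitz:
  fixes A :: "real^'n^'n"
  assumes "spd A"
  obtains L where "L-lipschitz_on UNIV (vi_sol A)"
proof -
  obtain c where c: "c > 0" "\<And>x::real^'n. c * (norm x)\<^sup>2 \<le> x \<bullet> (A *v x)"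
    using spd_coercive[OF assms] by blast
  have "norm (vi_sol A u1 - vi_sol A u2) \<le> 1 / c * norm (u1 - u2)" for u1 u2
  proof -
    define d where "d = vi_sol A u1 - vi_sol A u2"
    have "c * (norm d)\<^sup>2 \<le> (u1 - u2) \<bullet> d"
      using c(2)[of d] vi_solves_monotone[OF vi_sol_solves vi_sol_solves, OF assms assms, of u1 u2]
      unfolding d_def by linarith
    also have "\<dots> \<le> norm (u1 - u2) * norm d" by (rule norm_cauchy_schwarz)
    finally have "c * norm d \<le> norm (u1 - u2)"
      by (cases "norm d = 0") (auto simp: power2_eq_square)
    thus ?thesis unfolding d_def using c(1) by (simp add: field_simps)
  qed
  hence "(1 / c)-lipschitz_on UNIV (vi_sol A)"
    using c(1) by (intro lipschitz_onI) (auto simp: dist_norm)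
  thus thesis by (rule that)
qed

lemma tendsto_matrix_vector_mult [tendsto_intros]:
  "(f \<longlongrightarrow> a) F \<Longrightarrow> ((\<lambda>x. (M::real^'n^'m) *v f x) \<longlongrightarrow> M *v a) F"
  by (rule isCont_tendsto_compose[OF matrix_vector_mult_linear_continuous_at])

lemma vi_sol_tendsto:
  assumes "spd A" "(f \<longlongrightarrow> u) F"
  shows "((\<lambda>x. vi_sol A (f x)) \<longlongrightarrow> vi_sol A u) F"
proof -
  obtain L where "L-lipschitz_on UNIV (vi_sol A)" using vi_sol_lipschitz[OF assms(1)] .
  hence "isCont (vi_sol A) u"
    using lipschitz_on_continuous_on continuous_on_eq_continuous_at open_UNIV by blast
  thus ?thesis using assms(2) by (rule isCont_tendsto_compose)
qed

section \<open>The matrices \<open>A(N)\<close>\<close>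

lemma Amod_mult_index_in:
  assumes "i \<in> N"
  shows "(Amod A N *v x) $ i = x $ i"
proof -
  have "(Amod A N *v x) $ i = (\<Sum>j\<in>UNIV. (if i = j then 1 else 0) * x $ j)"
    unfolding matrix_vector_mult_def Amod_def using assms by (auto intro!: sum.cong)
  thus ?thesis by (simp add: mult_delta_left)
qed

lemma chimat_mult_index: "(chimat N *v r) $ i = (if i \<in> N then 0 else r $ i)"
proof -
  have "(chimat N *v r) $ i = (if i \<in> N then 0 else (\<Sum>j\<in>UNIV. (if i = j then 1 else 0) * r $ j))"
    unfolding matrix_vector_mult_def chimat_def by (auto intro!: sum.cong)
  thus ?thesis by (simp add: mult_delta_left)
qed

lemma Amod_mult_vanishing:
  assumes "\<forall>j\<in>N. x $ j = 0"
  shows "Amod A N *v x = chimat N *v (A *v x)"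
proof -
  have "(Amod A N *v x) $ i = (A *v x) $ i" if "i \<notin> N" for i
    unfolding matrix_vector_mult_def Amod_def using that assms by (auto intro!: sum.cong)
  thus ?thesis using assms by (simp add: vec_eq_iff chimat_mult_index Amod_mult_index_in)
qed

lemma Amod_invertible:
  assumes "spd A"
  shows "invertible (Amod A N)"
proof -
  have "x = 0" if x: "Amod A N *v x = 0" for x
  proof -
    have xN: "\<forall>j\<in>N. x $ j = 0" using x Amod_mult_index_in[of _ N A x] by simp
    hence "chimat N *v (A *v x) = 0" using x Amod_mult_vanishing[of N x A] by simp
    hence "\<forall>i. i \<notin> N \<longrightarrow> (A *v x) $ i = 0" by (metis chimat_mult_index zero_index)
    hence "x \<bullet> (A *v x) = 0" using xN by (auto simp: inner_vec_def intro!: sum.neutral)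
    thus "x = 0" using assms unfolding spd_def by (metis less_irrefl)
  qed
  thus ?thesis unfolding invertible_left_inverse matrix_left_invertible_ker by blast
qed

lemma matrix_inv_inverse:
  assumes "invertible (M :: 'a::semiring_1^'n^'n)"
  shows "M ** matrix_inv M = mat 1" "matrix_inv M ** M = mat 1"
  using someI_ex[OF assms[unfolded invertible_def]] unfolding matrix_inv_def by auto

definition vi_jacobian :: "real^'n^'n \<Rightarrow> 'n set \<Rightarrow> real^'n^'n" where
  "vi_jacobian A N = matrix_inv (Amod A N) ** chimat N"

lemma Amod_mult_vi_jacobian:
  assumes "spd A"
  shows "Amod A N *v (vi_jacobian A N *v p) = chimat N *v p"
  unfolding vi_jacobian_def using matrix_inv_inverse(1)[OF Amod_invertible[OF assms, of N]]
  by (simp add: matrix_vector_mul_assoc matrix_mul_assoc)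

lemma vi_jacobian_index_in:
  assumes "spd A" "i \<in> N"
  shows "(vi_jacobian A N *v p) $ i = 0"
  using Amod_mult_vi_jacobian[OF assms(1), of N p] Amod_mult_index_in[OF assms(2), of A]
    chimat_mult_index[of N p i] assms(2)
  by metis

lemma A_mult_vi_jacobian_index:
  assumes "spd A" "i \<notin> N"
  shows "(A *v (vi_jacobian A N *v p)) $ i = p $ i"
proof -
  have "\<forall>j\<in>N. (vi_jacobian A N *v p) $ j = 0" using vi_jacobian_index_in[OF assms(1)] by blast
  hence "chimat N *v (A *v (vi_jacobian A N *v p)) = chimat N *v p"
    using Amod_mult_vi_jacobian[OF assms(1), of N p] by (simp add: Amod_mult_vanishing)
  hence "(chimat N *v (A *v (vi_jacobian A N *v p))) $ i = (chimat N *v p) $ i" by simp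
  thus ?thesis using assms(2) by (simp add: chimat_mult_index)
qed

lemma vi_jacobian_mult_A:
  assumes "spd A" "\<forall>j\<in>N. x $ j = 0"
  shows "vi_jacobian A N *v (A *v x) = x"
proof -
  have "vi_jacobian A N *v (A *v x) = matrix_inv (Amod A N) *v (Amod A N *v x)"
    unfolding vi_jacobian_def Amod_mult_vanishing[OF assms(2)]
    by (simp add: matrix_vector_mul_assoc matrix_mul_assoc)
  thus ?thesis using matrix_inv_inverse(2)[OF Amod_invertible[OF assms(1), of N]]
    by (simp add: matrix_vector_mul_assoc)
qed

lemma vi_jacobian_mult_supported:
  assumes "\<forall>j. j \<notin> N \<longrightarrow> e $ j = 0"
  shows "vi_jacobian A N *v e = 0"
proof -
  have "chimat N *v e = 0" using assms by (simp add: vec_eq_iff chimat_mult_index)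
  thus ?thesis unfolding vi_jacobian_def by (simp add: matrix_vector_mul_assoc[symmetric])
qed

section \<open>Local structure of the solution operator\<close>

text \<open>The KKT system at \<open>u + p\<close> decouples: on \<open>N\<close> the solution is pinned to \<open>0\<close>, off \<open>N\<close>
  the multiplier keeps its sign \<open>\<plusminus>1\<close> and the equations are those of \<open>A(N)\<close>.\<close>
lemma vi_sol_perturb:
  assumes spd: "spd A"
    and active: "strongly_active A u \<subseteq> N" and zero: "\<forall>i\<in>N. vi_sol A u $ i = 0"
    and multiplier: "\<forall>i\<in>N. \<bar>vi_q A u $ i + (p - A *v (vi_jacobian A N *v p)) $ i\<bar> \<le> 1"
    and sign: "\<forall>i. i \<notin> N \<longrightarrow> 0 \<le> vi_q A u $ i * (vi_sol A u + vi_jacobian A N *v p) $ i"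
  shows "vi_sol A (u + p) = vi_sol A u + vi_jacobian A N *v p"
proof (rule vi_sol_eqI[OF spd])
  define y where "y = vi_sol A u"
  define q where "q = vi_q A u"
  define m where "m = vi_jacobian A N *v p"
  have residual: "u + p - A *v (y + m) = q + (p - A *v m)"
    unfolding q_def y_def vi_q_def by (simp add: algebra_simps)
  have "\<bar>(q + (p - A *v m)) $ i\<bar> \<le> 1 \<and> (y + m) $ i * (q + (p - A *v m)) $ i = \<bar>(y + m) $ i\<bar>" for i
  proof (cases "i \<in> N")
    case True
    then show ?thesis
      using multiplier zero vi_jacobian_index_in[OF spd True] by (simp add: y_def q_def m_def)
  next
    case False
    have "\<not> \<bar>q $ i\<bar> < 1" using active False unfolding strongly_active_def q_def by blast
    hence q1: "\<bar>q $ i\<bar> = 1" using vi_sol_kkt(1)[OF spd, of u i] unfolding q_def by linarith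
    have "\<bar>(y + m) $ i\<bar> = \<bar>(y + m) $ i * q $ i\<bar>" using q1 by (simp add: abs_mult)
    also have "\<dots> = (y + m) $ i * q $ i"
      using sign False by (simp add: y_def q_def m_def mult.commute)
    finally show ?thesis
      using q1 A_mult_vi_jacobian_index[OF spd False] by (simp add: m_def)
  qed
  thus "vi_kkt A (u + p) (vi_sol A u + vi_jacobian A N *v p)"
    unfolding vi_kkt_def residual[unfolded y_def m_def] by (simp add: q_def y_def m_def)
qed

lemma eventually_abs_add_le_1:
  fixes q :: real
  assumes "(g \<longlongrightarrow> 0) F" "\<bar>q\<bar> < 1"
  shows "\<forall>\<^sub>F x in F. \<bar>q + g x\<bar> \<le> 1"
proof -
  have "((\<lambda>x. \<bar>q + g x\<bar>) \<longlongrightarrow> \<bar>q + 0\<bar>) F" by (intro tendsto_intros assms(1))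
  hence "\<forall>\<^sub>F x in F. \<bar>q + g x\<bar> < 1" using assms(2) by (intro order_tendstoD(2)) simp_all
  thus ?thesis by (auto elim: eventually_mono)
qed

lemma eventually_abs_add_scaled_le_1:
  fixes q z :: real
  assumes "\<bar>q\<bar> \<le> 1" and boundary: "\<bar>q\<bar> = 1 \<Longrightarrow> q * z < 0"
  shows "\<forall>\<^sub>F t in at_right 0. \<bar>q + t * z\<bar> \<le> 1"
proof (cases "\<bar>q\<bar> = 1")
  case True
  have qq: "q * q = 1" using True by (metis abs_mult_self_eq mult_1_right)
  have "((\<lambda>t. t * - (q * z)) \<longlongrightarrow> 0 * - (q * z)) (at_right 0)" by (intro tendsto_intros)
  hence "\<forall>\<^sub>F t in at_right 0. t * - (q * z) < 1" by (rule order_tendstoD(2)) simp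
  moreover have "\<forall>\<^sub>F t in at_right (0::real). 0 < t" by (rule eventually_at_right_less)
  ultimately show ?thesis
  proof eventually_elim
    case (elim t)
    have "\<bar>q + t * z\<bar> = \<bar>q\<bar> * \<bar>q + t * z\<bar>" using True by simp
    also have "\<dots> = \<bar>q * q + t * (q * z)\<bar>" by (simp add: abs_mult[symmetric] algebra_simps)
    also have "\<dots> = \<bar>1 + t * (q * z)\<bar>" using qq by simp
    also have "\<dots> \<le> 1" using elim boundary[OF True] mult_pos_neg[of t "q * z"] by simp
    finally show ?case .
  qed
next
  case False
  have "((\<lambda>t. t * z) \<longlongrightarrow> 0 * z) (at_right 0)" by (intro tendsto_intros)
  thus ?thesis using False assms(1) by (intro eventually_abs_add_le_1) simp_all
qed

text \<open>Off the zero set the multiplier has the sign of the solution, and small perturbations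
  keep it, so only the multiplier condition on the zero set has to be checked.\<close>
lemma vi_sol_eventually_perturb:
  fixes A :: "real^'n^'n" and v :: "real^'n"
  defines "Z \<equiv> {i. vi_sol A v $ i = 0}"
  assumes spd: "spd A" and lim: "(p \<longlongrightarrow> 0) F"
    and multiplier: "\<forall>i\<in>Z. \<forall>\<^sub>F x in F.
      \<bar>vi_q A v $ i + (p x - A *v (vi_jacobian A Z *v p x)) $ i\<bar> \<le> 1"
  shows "\<forall>\<^sub>F x in F. vi_sol A (v + p x) = vi_sol A v + vi_jacobian A Z *v p x"
proof -
  have sign: "\<forall>\<^sub>F x in F. 0 < vi_q A v $ i * (vi_sol A v + vi_jacobian A Z *v p x) $ i"
    if "i \<notin> Z" for i
  proof (rule order_tendstoD(1))
    show "((\<lambda>x. vi_q A v $ i * (vi_sol A v + vi_jacobian A Z *v p x) $ i)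
        \<longlongrightarrow> vi_q A v $ i * (vi_sol A v + vi_jacobian A Z *v 0) $ i) F"
      by (intro tendsto_intros lim)
    show "0 < vi_q A v $ i * (vi_sol A v + vi_jacobian A Z *v 0) $ i"
      using vi_sol_kkt(2)[OF spd, of v i] that unfolding Z_def by (simp add: mult.commute)
  qed
  have "\<forall>\<^sub>F x in F. \<forall>i\<in>Z. \<bar>vi_q A v $ i + (p x - A *v (vi_jacobian A Z *v p x)) $ i\<bar> \<le> 1"
    using multiplier by (intro eventually_ball_finite) simp_all
  moreover have "\<forall>\<^sub>F x in F. \<forall>i\<in>- Z. 0 < vi_q A v $ i * (vi_sol A v + vi_jacobian A Z *v p x) $ i"
    using sign by (intro eventually_ball_finite) simp_all
  ultimately show ?thesis
  proof eventually_elim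
    case (elim x)
    show ?case
    proof (rule vi_sol_perturb[OF spd])
      show "strongly_active A v \<subseteq> Z"
        using vi_sol_eq_0_if_strongly_active[OF spd] unfolding Z_def by blast
      show "\<forall>i\<in>Z. vi_sol A v $ i = 0" unfolding Z_def by blast
      show "\<forall>i\<in>Z. \<bar>vi_q A v $ i + (p x - A *v (vi_jacobian A Z *v p x)) $ i\<bar> \<le> 1"
        using elim by blast
      show "\<forall>i. i \<notin> Z \<longrightarrow> 0 \<le> vi_q A v $ i * (vi_sol A v + vi_jacobian A Z *v p x) $ i"
        using elim by (simp add: less_imp_le)
    qed
  qed
qed

lemma vi_sol_eventually_affine:
  assumes spd: "spd A" and no_biactive: "biactive A v = {}"
  shows "\<forall>\<^sub>F x in at v. vi_sol A x = vi_sol A v + vi_jacobian A (strongly_active A v) *v (x - v)"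
proof -
  define J where "J = vi_jacobian A (strongly_active A v)"
  have Z: "{i. vi_sol A v $ i = 0} = strongly_active A v"
    using vi_sol_zero_set[OF spd, of v] no_biactive by simp
  have lim: "((\<lambda>x. x - v) \<longlongrightarrow> 0) (at v)" by (rule LIM_zero[OF tendsto_ident_at])
  have "((\<lambda>x. ((x - v) - A *v (J *v (x - v))) $ i) \<longlongrightarrow> (0 - A *v (J *v 0)) $ i) (at v)" for i
    by (intro tendsto_intros lim)
  hence "\<forall>i\<in>strongly_active A v. \<forall>\<^sub>F x in at v.
      \<bar>vi_q A v $ i + ((x - v) - A *v (J *v (x - v))) $ i\<bar> \<le> 1"
    unfolding strongly_active_def by (simp add: eventually_abs_add_le_1)
  from vi_sol_eventually_perturb[where v = v, OF spd lim, unfolded Z, folded J_def, OF this]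
  show ?thesis unfolding J_def by simp
qed

lemma vi_sol_has_derivative_if_biactive_empty:
  assumes "spd A" "biactive A v = {}"
  shows "(vi_sol A has_derivative (\<lambda>h. vi_jacobian A (strongly_active A v) *v h)) (at v)"
proof -
  define J where "J = vi_jacobian A (strongly_active A v)"
  have "((\<lambda>x. vi_sol A v + J *v (x - v)) has_derivative (\<lambda>h. J *v h)) (at v)"
    by (auto intro!: derivative_eq_intros
        bounded_linear.has_derivative[OF matrix_vector_mul_bounded_linear])
  moreover have "\<forall>\<^sub>F x in at v. vi_sol A v + J *v (x - v) = vi_sol A x"
    using vi_sol_eventually_affine[OF assms] unfolding J_def by (simp add: eq_commute)
  ultimately have "(vi_sol A has_derivative (\<lambda>h. J *v h)) (at v)"
    by (rule has_derivative_transform_eventually) simp_all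
  thus ?thesis unfolding J_def .
qed

section \<open>The Bouligand subdifferential\<close>

lemma active_sets_eqI:
  assumes spd: "spd A" and zero: "{i. vi_sol A v $ i = 0} = N"
    and multiplier: "\<forall>i\<in>N. \<bar>vi_q A v $ i\<bar> < 1"
  shows "strongly_active A v = N" "biactive A v = {}"
proof -
  have "strongly_active A v \<subseteq> N" using vi_sol_eq_0_if_strongly_active[OF spd] zero by blast
  moreover have "N \<subseteq> strongly_active A v" using multiplier unfolding strongly_active_def by blast
  ultimately show "strongly_active A v = N" by blast
  moreover have "biactive A v \<subseteq> N" using zero unfolding biactive_def by blast
  ultimately show "biactive A v = {}" using strongly_active_Int_biactive by blast
qed

lemma abs_vi_q_release_lt_1:
  assumes "B0 \<subseteq> biactive A u" "i \<in> strongly_active A u \<union> B0" "0 < t" "t < 1"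
  shows "\<bar>vi_q A u $ i - t * (if i \<in> B0 then vi_q A u $ i else 0)\<bar> < 1"
proof (cases "i \<in> B0")
  case True
  hence "\<bar>vi_q A u $ i\<bar> = 1" using assms(1) unfolding biactive_def by blast
  moreover have "vi_q A u $ i - t * vi_q A u $ i = (1 - t) * vi_q A u $ i" by (simp add: algebra_simps)
  ultimately show ?thesis using True assms(3,4) by (simp add: abs_mult)
next
  case False
  thus ?thesis using assms(2) unfolding strongly_active_def by simp
qed

text \<open>Moving along \<open>A d - e\<close>, where \<open>d\<close> and \<open>e\<close> are the multiplier restricted to
  \<open>biactive A u - B0\<close> and to \<open>B0\<close>, lets the solution leave zero on \<open>biactive A u - B0\<close>
  and pulls the multiplier on \<open>B0\<close> strictly inside \<open>[-1, 1]\<close>.\<close>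
lemma vi_sol_release_biactive:
  fixes A :: "real^'n^'n" and u :: "real^'n" and B0 :: "'n set"
  defines "d \<equiv> \<chi> i. if i \<in> biactive A u - B0 then vi_q A u $ i else 0"
    and "e \<equiv> \<chi> i. if i \<in> B0 then vi_q A u $ i else 0"
  assumes spd: "spd A" and B0: "B0 \<subseteq> biactive A u" and t: "0 < t" "t < 1"
  shows "vi_sol A (u + t *\<^sub>R (A *v d - e)) = vi_sol A u + t *\<^sub>R d"
proof -
  define N where "N = strongly_active A u \<union> B0"
  have d_N: "\<forall>j\<in>N. d $ j = 0" and e_N: "\<forall>j. j \<notin> N \<longrightarrow> e $ j = 0"
    using strongly_active_Int_biactive[of A u] unfolding d_def e_def N_def by auto
  have J_w: "vi_jacobian A N *v (t *\<^sub>R (A *v d - e)) = t *\<^sub>R d"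
    using vi_jacobian_mult_A[OF spd d_N] vi_jacobian_mult_supported[OF e_N]
    by (simp add: matrix_vector_mult_scaleR matrix_vector_mult_diff_distrib)
  have residual: "t *\<^sub>R (A *v d - e) - A *v (t *\<^sub>R d) = - t *\<^sub>R e"
    by (simp add: algebra_simps)
  show ?thesis
    unfolding J_w[symmetric]
  proof (rule vi_sol_perturb[OF spd])
    show "strongly_active A u \<subseteq> N" unfolding N_def by blast
    show "\<forall>i\<in>N. vi_sol A u $ i = 0"
      using B0 vi_sol_zero_set[OF spd, of u] unfolding N_def by blast
    show "\<forall>i\<in>N. \<bar>vi_q A u $ i + (t *\<^sub>R (A *v d - e)
        - A *v (vi_jacobian A N *v (t *\<^sub>R (A *v d - e)))) $ i\<bar> \<le> 1"
    proof
      fix i assume "i \<in> N"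
      from abs_vi_q_release_lt_1[OF B0 this[unfolded N_def] t]
      show "\<bar>vi_q A u $ i + (t *\<^sub>R (A *v d - e)
          - A *v (vi_jacobian A N *v (t *\<^sub>R (A *v d - e)))) $ i\<bar> \<le> 1"
        unfolding J_w residual by (simp add: e_def)
    qed
    show "\<forall>i. i \<notin> N \<longrightarrow>
        0 \<le> vi_q A u $ i * (vi_sol A u + vi_jacobian A N *v (t *\<^sub>R (A *v d - e))) $ i"
    proof (intro allI impI)
      fix i assume "i \<notin> N"
      have "0 \<le> vi_q A u $ i * (vi_sol A u $ i + t * d $ i)"
      proof (cases "i \<in> biactive A u")
        case True
        thus ?thesis using \<open>i \<notin> N\<close> t unfolding N_def d_def biactive_def
          by (simp add: mult.left_commute[of _ t])
      next
        case False
        thus ?thesis using vi_sol_kkt(2)[OF spd, of u i] unfolding d_def by (simp add: mult.commute)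
      qed
      thus "0 \<le> vi_q A u $ i * (vi_sol A u + vi_jacobian A N *v (t *\<^sub>R (A *v d - e))) $ i"
        unfolding J_w by simp
    qed
  qed
qed

lemma direction_prescribing_active_sets:
  assumes spd: "spd A" and B0: "B0 \<subseteq> biactive A u"
  obtains w where "\<And>t. 0 < t \<Longrightarrow> t < 1 \<Longrightarrow> biactive A (u + t *\<^sub>R w) = {} \<and>
      strongly_active A (u + t *\<^sub>R w) = strongly_active A u \<union> B0"
proof -
  define d where "d = (\<chi> i. if i \<in> biactive A u - B0 then vi_q A u $ i else 0)"
  define e where "e = (\<chi> i. if i \<in> B0 then vi_q A u $ i else 0)"
  have "biactive A (u + t *\<^sub>R (A *v d - e)) = {} \<and>
      strongly_active A (u + t *\<^sub>R (A *v d - e)) = strongly_active A u \<union> B0"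
    if t: "0 < t" "t < 1" for t
  proof -
    have sol: "vi_sol A (u + t *\<^sub>R (A *v d - e)) = vi_sol A u + t *\<^sub>R d"
      unfolding d_def e_def by (rule vi_sol_release_biactive[OF spd B0 t])
    hence multiplier: "vi_q A (u + t *\<^sub>R (A *v d - e)) = vi_q A u - t *\<^sub>R e"
      unfolding vi_q_def by (simp add: algebra_simps)
    have "{i. vi_sol A (u + t *\<^sub>R (A *v d - e)) $ i = 0} = strongly_active A u \<union> B0"
      using t B0 vi_sol_zero_set[OF spd, of u] strongly_active_Int_biactive[of A u]
      unfolding sol by (auto simp: d_def biactive_def)
    moreover have "\<forall>i\<in>strongly_active A u \<union> B0. \<bar>vi_q A (u + t *\<^sub>R (A *v d - e)) $ i\<bar> < 1"
      using abs_vi_q_release_lt_1[OF B0 _ t] unfolding multiplier by (simp add: e_def)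
    ultimately show ?thesis using active_sets_eqI[OF spd] by blast
  qed
  thus thesis by (rule that)
qed

lemma vi_jacobian_mem_bouligand_subdiff:
  assumes spd: "spd A" and B0: "B0 \<subseteq> biactive A u"
  shows "vi_jacobian A (strongly_active A u \<union> B0) \<in> bouligand_subdiff (vi_sol A) u"
proof -
  obtain w where w: "\<And>t. 0 < t \<Longrightarrow> t < 1 \<Longrightarrow> biactive A (u + t *\<^sub>R w) = {} \<and>
      strongly_active A (u + t *\<^sub>R w) = strongly_active A u \<union> B0"
    using direction_prescribing_active_sets[OF assms] by blast
  define us where "us k = u + (1 / (real k + 2)) *\<^sub>R w" for k :: nat
  have "(\<lambda>k. 1 / (real k + 2)) \<longlonglongrightarrow> 0"
    using LIMSEQ_ignore_initial_segment[OF lim_1_over_n, of 2] by (simp add: add.commute)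
  hence "us \<longlonglongrightarrow> u"
    unfolding us_def using tendsto_add[OF tendsto_const tendsto_scaleR[OF _ tendsto_const]] by force
  moreover have "(vi_sol A has_derivative (\<lambda>h. vi_jacobian A (strongly_active A u \<union> B0) *v h)) (at (us k))"
    for k
  proof -
    have "biactive A (us k) = {}" "strongly_active A (us k) = strongly_active A u \<union> B0"
      using w[of "1 / (real k + 2)"] unfolding us_def by (simp_all add: field_simps)
    thus ?thesis using vi_sol_has_derivative_if_biactive_empty[OF spd, of "us k"] by simp
  qed
  ultimately show ?thesis
    unfolding bouligand_subdiff_def by (intro CollectI exI[of _ us] exI[of _ "\<lambda>k. _"]) auto
qed

lemma has_derivative_ray_unique:
  fixes f :: "'a::real_normed_vector \<Rightarrow> 'b::real_normed_vector"
  assumes deriv: "(f has_derivative f') (at v)"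
    and ray: "\<forall>\<^sub>F t in at_right 0. f (v + t *\<^sub>R w) = f v + t *\<^sub>R c"
  shows "f' w = c"
proof -
  have "((\<lambda>t::real. v + t *\<^sub>R w) has_derivative (\<lambda>t. t *\<^sub>R w)) (at 0 within {0..1})"
    by (auto intro!: derivative_eq_intros)
  moreover have "(f has_derivative f') (at (v + 0 *\<^sub>R w))" using deriv by simp
  ultimately have "((\<lambda>t. f (v + t *\<^sub>R w)) has_derivative (\<lambda>t. f' (t *\<^sub>R w))) (at 0 within {0..1})"
    by (rule has_derivative_compose)
  moreover have "\<forall>\<^sub>F t in at 0 within {0..1}. f (v + t *\<^sub>R w) = f v + t *\<^sub>R c"
    using ray at_within_Icc_at_right[of "0::real" 1] by simp
  ultimately have "((\<lambda>t. f v + t *\<^sub>R c) has_derivative (\<lambda>t. f' (t *\<^sub>R w))) (at 0 within {0..1})"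
    by (rule has_derivative_transform_eventually) simp_all
  hence "((\<lambda>t. f v + t *\<^sub>R c) has_vector_derivative f' w) (at 0 within {0..1})"
    unfolding has_vector_derivative_def
    using linear_cmul[OF has_derivative_linear[OF deriv]] by simp
  moreover have "((\<lambda>t. f v + t *\<^sub>R c) has_vector_derivative c) (at 0 within {0..1})"
    unfolding has_vector_derivative_def by (auto intro!: derivative_eq_intros)
  moreover have "at (0::real) within {0..1} \<noteq> bot"
    using at_within_Icc_at_right[of "0::real" 1] by simp
  ultimately show ?thesis by (metis vector_derivative_unique_within)
qed

lemma vi_sol_along_ray:
  fixes A :: "real^'n^'n" and v w :: "real^'n"
  defines "Z \<equiv> {i. vi_sol A v $ i = 0}"
  assumes spd: "spd A"
    and boundary: "\<forall>i\<in>Z. \<bar>vi_q A v $ i\<bar> = 1 \<longrightarrow>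
      vi_q A v $ i * (w - A *v (vi_jacobian A Z *v w)) $ i < 0"
  shows "\<forall>\<^sub>F t in at_right 0. vi_sol A (v + t *\<^sub>R w) = vi_sol A v + t *\<^sub>R (vi_jacobian A Z *v w)"
proof -
  define J where "J = vi_jacobian A Z"
  have "((\<lambda>t. t *\<^sub>R w) \<longlongrightarrow> 0 *\<^sub>R w) (at_right 0)" by (intro tendsto_intros)
  hence lim: "((\<lambda>t. t *\<^sub>R w) \<longlongrightarrow> 0) (at_right 0)" by simp
  have "\<forall>i\<in>Z. \<forall>\<^sub>F t in at_right 0. \<bar>vi_q A v $ i + t * (w - A *v (J *v w)) $ i\<bar> \<le> 1"
    using vi_sol_kkt(1)[OF spd] boundary unfolding J_def by (auto intro: eventually_abs_add_scaled_le_1)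
  hence "\<forall>i\<in>Z. \<forall>\<^sub>F t in at_right 0. \<bar>vi_q A v $ i + (t *\<^sub>R w - A *v (J *v (t *\<^sub>R w))) $ i\<bar> \<le> 1"
    by (simp add: algebra_simps)
  from vi_sol_eventually_perturb[where v = v, OF spd lim, folded Z_def J_def, OF this]
  show ?thesis by (simp add: J_def matrix_vector_mult_scaleR)
qed

text \<open>The directions along which the ray formula holds form a cone; it contains the negated
  multiplier \<open>e\<close> on the zero set and absorbs any \<open>h\<close> once \<open>e\<close> is weighted heavily enough,
  so by linearity \<open>D\<close> and the candidate Jacobian agree everywhere.\<close>
lemma vi_sol_derivative_eq:
  assumes spd: "spd A" and deriv: "(vi_sol A has_derivative (\<lambda>h. D *v h)) (at v)"
  shows "D = vi_jacobian A {i. vi_sol A v $ i = 0}"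
proof -
  define Z where "Z = {i. vi_sol A v $ i = 0}"
  define M where "M = vi_jacobian A Z"
  define q where "q = vi_q A v"
  define r where "r h = h - A *v (M *v h)" for h
  define boundary where "boundary w \<longleftrightarrow> (\<forall>i\<in>Z. \<bar>q $ i\<bar> = 1 \<longrightarrow> q $ i * r w $ i < 0)" for w
  have agree: "D *v w = M *v w" if "boundary w" for w
    using has_derivative_ray_unique[OF deriv vi_sol_along_ray[OF spd]] that
    unfolding boundary_def r_def M_def Z_def q_def by blast
  define e where "e = (\<chi> i. if i \<in> Z then - q $ i else 0)"
  have M_e: "M *v e = 0" unfolding M_def by (rule vi_jacobian_mult_supported) (simp add: e_def)
  have q_sq: "q $ i * q $ i = 1" if "\<bar>q $ i\<bar> = 1" for i
    using that by (metis abs_mult_self_eq mult_1_right)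
  have r_shift: "r (h + c *\<^sub>R e) = r h + c *\<^sub>R e" for h c
    using M_e unfolding r_def by (simp add: algebra_simps)
  have "r e = e" unfolding r_def using M_e by simp
  hence "boundary e" unfolding boundary_def by (simp add: e_def q_sq)
  hence agree_e: "D *v e = M *v e" by (rule agree)
  have "D *v h = M *v h" for h
  proof -
    define s where "s = norm (r h) + 1"
    have "boundary (h + s *\<^sub>R e)"
      unfolding boundary_def
    proof (intro ballI impI)
      fix i assume "i \<in> Z" "\<bar>q $ i\<bar> = 1"
      have "q $ i * r h $ i \<le> \<bar>r h $ i\<bar>"
        using \<open>\<bar>q $ i\<bar> = 1\<close> by (metis abs_ge_self abs_mult mult_1_left)
      also have "\<dots> < s" unfolding s_def using component_le_norm_cart[of "r h" i] by simp
      finally show "q $ i * r (h + s *\<^sub>R e) $ i < 0"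
        unfolding r_shift using \<open>i \<in> Z\<close> q_sq[OF \<open>\<bar>q $ i\<bar> = 1\<close>] by (simp add: e_def algebra_simps)
    qed
    hence "D *v (h + s *\<^sub>R e) = M *v (h + s *\<^sub>R e)" by (rule agree)
    thus ?thesis using agree_e by (simp add: matrix_vector_right_distrib matrix_vector_mult_scaleR)
  qed
  thus ?thesis unfolding M_def Z_def by (simp add: matrix_eq)
qed

lemma eventually_zero_set_between:
  assumes spd: "spd A" and lim: "(f \<longlongrightarrow> u) F"
  shows "\<forall>\<^sub>F x in F. strongly_active A u \<subseteq> {i. vi_sol A (f x) $ i = 0} \<and>
    {i. vi_sol A (f x) $ i = 0} \<subseteq> strongly_active A u \<union> biactive A u"
proof -
  have lim_sol: "((\<lambda>x. vi_sol A (f x)) \<longlongrightarrow> vi_sol A u) F" by (rule vi_sol_tendsto[OF spd lim])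
  hence lim_q: "((\<lambda>x. vi_q A (f x)) \<longlongrightarrow> vi_q A u) F"
    unfolding vi_q_def by (intro tendsto_intros lim)
  have "\<forall>\<^sub>F x in F. \<forall>i. (i \<in> strongly_active A u \<longrightarrow> vi_sol A (f x) $ i = 0) \<and>
      (vi_sol A (f x) $ i = 0 \<longrightarrow> i \<in> strongly_active A u \<union> biactive A u)"
  proof (rule eventually_all_finite)
    fix i
    show "\<forall>\<^sub>F x in F. (i \<in> strongly_active A u \<longrightarrow> vi_sol A (f x) $ i = 0) \<and>
        (vi_sol A (f x) $ i = 0 \<longrightarrow> i \<in> strongly_active A u \<union> biactive A u)"
    proof (cases "vi_sol A u $ i = 0")
      case True
      hence zero: "i \<in> strongly_active A u \<union> biactive A u" using vi_sol_zero_set[OF spd] by blast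
      show ?thesis
      proof (cases "i \<in> strongly_active A u")
        case True
        have "((\<lambda>x. \<bar>vi_q A (f x) $ i\<bar>) \<longlongrightarrow> \<bar>vi_q A u $ i\<bar>) F" by (intro tendsto_intros lim_q)
        hence "\<forall>\<^sub>F x in F. \<bar>vi_q A (f x) $ i\<bar> < 1"
          using True unfolding strongly_active_def by (intro order_tendstoD(2)) auto
        thus ?thesis using zero vi_sol_eq_0_if_strongly_active[OF spd]
          unfolding strongly_active_def by (auto elim: eventually_mono)
      qed (use zero in simp)
    next
      case False
      have "((\<lambda>x. \<bar>vi_sol A (f x) $ i\<bar>) \<longlongrightarrow> \<bar>vi_sol A u $ i\<bar>) F" by (intro tendsto_intros lim_sol)
      hence "\<forall>\<^sub>F x in F. \<bar>vi_sol A (f x) $ i\<bar> > 0"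
        using False by (intro order_tendstoD(1)) auto
      moreover have "i \<notin> strongly_active A u"
        using False vi_sol_eq_0_if_strongly_active[OF spd] by blast
      ultimately show ?thesis
        by (elim eventually_mono) simp
    qed
  qed
  thus ?thesis by (rule eventually_mono) blast
qed

lemma bouligand_subdiff_vi_sol_subset:
  assumes spd: "spd A"
  shows "bouligand_subdiff (vi_sol A) u
    \<subseteq> (\<lambda>B0. vi_jacobian A (strongly_active A u \<union> B0)) ` Pow (biactive A u)"
proof
  fix M assume "M \<in> bouligand_subdiff (vi_sol A) u"
  then obtain us D where us: "us \<longlonglongrightarrow> u"
    and deriv: "\<And>j. (vi_sol A has_derivative (\<lambda>h. D j *v h)) (at (us j))" and "D \<longlonglongrightarrow> M"
    unfolding bouligand_subdiff_def by blast
  have eventually_in: "\<forall>\<^sub>F j in sequentially.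
      D j \<in> (\<lambda>B0. vi_jacobian A (strongly_active A u \<union> B0)) ` Pow (biactive A u)"
    using eventually_zero_set_between[OF spd us]
  proof eventually_elim
    case (elim j)
    define Z where "Z = {i. vi_sol A (us j) $ i = 0}"
    have "D j = vi_jacobian A Z" unfolding Z_def by (rule vi_sol_derivative_eq[OF spd deriv])
    also have "Z = strongly_active A u \<union> (Z - strongly_active A u)" using elim unfolding Z_def by blast
    finally have "D j = vi_jacobian A (strongly_active A u \<union> (Z - strongly_active A u))" .
    moreover have "Z - strongly_active A u \<in> Pow (biactive A u)" using elim unfolding Z_def by blast
    ultimately show ?case by blast
  qed
  show "M \<in> (\<lambda>B0. vi_jacobian A (strongly_active A u \<union> B0)) ` Pow (biactive A u)"
    by (rule Lim_in_closed_set[OF finite_imp_closed eventually_in _ \<open>D \<longlonglongrightarrow> M\<close>]) auto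
qed

theorem theorem4p1:
  fixes A :: "real^'n^'n" and u :: "real^'n"
  assumes "spd A"
  shows "bouligand_subdiff (vi_sol A) u =
    {matrix_inv (Amod A (strongly_active A u \<union> B0)) ** chimat (strongly_active A u \<union> B0)
      | B0. B0 \<subseteq> biactive A u}"
proof -
  have rhs: "{matrix_inv (Amod A (strongly_active A u \<union> B0)) ** chimat (strongly_active A u \<union> B0)
      | B0. B0 \<subseteq> biactive A u}
    = (\<lambda>B0. vi_jacobian A (strongly_active A u \<union> B0)) ` Pow (biactive A u)"
    unfolding vi_jacobian_def by auto
  have "(\<lambda>B0. vi_jacobian A (strongly_active A u \<union> B0)) ` Pow (biactive A u)
    \<subseteq> bouligand_subdiff (vi_sol A) u"
    using vi_jacobian_mem_bouligand_subdiff[OF assms] by blast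
  with bouligand_subdiff_vi_sol_subset[OF assms] show ?thesis unfolding rhs by (rule subset_antisym)
qed

end
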